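(* Let $f$ be the polynomial $$f(t)=\frac{2431}{80}t^9-\frac{1287}{20}t^7+\frac{18333}{400}t^5+\frac{343}{40}t^4-\frac{83}{10}t^3-\frac{213}{100}t^2+\frac{t}{10}-\frac{1}{200},$$ let $-t_0$ (with $t_0\approx 0.5907$) be the unique root of $f$ in $[-1,1/2]$, and let $\theta_0=\arccos t_0\approx 53.794^\circ$. Let $e_0\in\mathbf{S}^2$ and let $y_1,\dots,y_m\in\mathbf{S}^2$ satisfy $\mathrm{dist}(y_i,y_j)\ge60^\circ$ for all $i\ne j$ and $\mathrm{dist}(e_0,y_i)<\theta_0$ for all $i$. Then $m\le 4$.
   Context: $\mathrm{dist}$ denotes the angular (spherical) distance on the unit sphere $\mathbf{S}^2\subset\mathbb{R}^3$. *)

theory Defs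
  imports "HOL-Analysis.Analysis"
begin

definition S2 :: "(real^3) set" where
  "S2 = {x. norm x = 1}"

definition sdist :: "real^3 \<Rightarrow> real^3 \<Rightarrow> real" where
  "sdist x y = arccos (x \<bullet> y)"

definition fpoly :: "real \<Rightarrow> real" where
  "fpoly t = 2431/80 * t^9 - 1287/20 * t^7 + 18333/400 * t^5 + 343/40 * t^4
             - 83/10 * t^3 - 213/100 * t^2 + t/10 - 1/200"

definition t0 :: real where
  "t0 = - (THE s. s \<in> {-1..1/2} \<and> fpoly s = 0)"

definition theta0 :: real where
  "theta0 = arccos t0"

end

theory Submission
  imports Defs "HOL-Computational_Algebra.Polynomial"
begin

text \<open>Put \<open>a\<^sub>i = e\<^sub>0 \<bullet> y\<^sub>i\<close> and project the \<open>y\<^sub>i\<close> to the plane orthogonal to \<open>e\<^sub>0\<close>. Among five projections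
  two enclose an angle of at most \<open>72\<degree>\<close>, so for them
  \<open>y\<^sub>i \<bullet> y\<^sub>j \<ge> a\<^sub>i a\<^sub>j + cos 72\<degree> \<surd>(1 - a\<^sub>i\<^sup>2) \<surd>(1 - a\<^sub>j\<^sup>2)\<close>. Since \<open>cos 72\<degree> > 0.3\<close> and
  \<open>a\<^sub>i, a\<^sub>j > t\<^sub>0 > 0.58\<close>, the right-hand side exceeds \<open>1/2 = cos 60\<degree>\<close>, a contradiction.
  All that is used about \<open>t\<^sub>0\<close> is \<open>0.58 < t\<^sub>0 < 0.6\<close>; it follows from sign conditions on \<open>f\<close> and
  \<open>f'\<close> on subintervals, certified by Taylor expansions with exact rational coefficients.\<close>

definition taylor_lower_bound :: "real poly \<Rightarrow> real \<Rightarrow> real \<Rightarrow> real" where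
  "taylor_lower_bound p a r =
     coeff (p \<circ>\<^sub>p [:a, 1:]) 0 - (\<Sum>k=1..degree p. \<bar>coeff (p \<circ>\<^sub>p [:a, 1:]) k\<bar> * r ^ k)"

lemma taylor_lower_bound_le_poly:
  fixes p :: "real poly"
  assumes "\<bar>x - a\<bar> \<le> r"
  shows "taylor_lower_bound p a r \<le> poly p x"
proof -
  define q where "q = p \<circ>\<^sub>p [:a, 1:]"
  have deg: "degree q = degree p" by (simp add: q_def degree_pcompose)
  have "poly p x = poly q (x - a)" by (simp add: q_def poly_pcompose)
  also have "\<dots> = coeff q 0 + (\<Sum>k=1..degree p. coeff q k * (x - a) ^ k)"
    by (simp add: poly_altdef deg atMost_atLeast0 sum.atLeast_Suc_atMost)
  finally have taylor: "poly p x = coeff q 0 + (\<Sum>k=1..degree p. coeff q k * (x - a) ^ k)" .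
  have "- (\<bar>coeff q k\<bar> * r ^ k) \<le> coeff q k * (x - a) ^ k" for k
  proof -
    have "\<bar>coeff q k * (x - a) ^ k\<bar> \<le> \<bar>coeff q k\<bar> * r ^ k"
      by (simp add: abs_mult power_abs mult_left_mono power_mono assms)
    then show ?thesis by linarith
  qed
  then have "- (\<Sum>k=1..degree p. \<bar>coeff q k\<bar> * r ^ k) \<le> (\<Sum>k=1..degree p. coeff q k * (x - a) ^ k)"
    by (simp add: sum_negf[symmetric] sum_mono)
  with taylor show ?thesis by (simp add: taylor_lower_bound_def q_def)
qed

fun certified_pos_chain :: "real poly \<Rightarrow> real list \<Rightarrow> bool" where
  "certified_pos_chain p (l # u # bs) \<longleftrightarrow>
     0 < taylor_lower_bound p ((l + u) / 2) ((u - l) / 2) \<and> certified_pos_chain p (u # bs)"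
| "certified_pos_chain p _ \<longleftrightarrow> True"

lemma poly_pos_if_certified_pos_chain:
  assumes "certified_pos_chain p (b # bs)" "bs \<noteq> []" "b \<le> x" "x \<le> last bs"
  shows "0 < poly p x"
  using assms
proof (induction bs arbitrary: b)
  case Nil
  then show ?case by simp
next
  case (Cons u bs)
  show ?case
  proof (cases "x \<le> u")
    case True
    then have "\<bar>x - (b + u) / 2\<bar> \<le> (u - b) / 2" using Cons.prems(3) by (simp add: abs_le_iff field_simps)
    then show ?thesis
      using Cons.prems(1) taylor_lower_bound_le_poly by (metis certified_pos_chain.simps(1) order.strict_trans2)
  next
    case False
    then show ?thesis using Cons by (cases bs) auto
  qed
qed

definition fpoly_poly :: "real poly" where
  "fpoly_poly = [:-1/200, 1/10, -213/100, -83/10, 343/40, 18333/400, 0, -1287/20, 0, 2431/80:]"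

lemma poly_fpoly_poly: "poly fpoly_poly = fpoly"
  by (simp add: fun_eq_iff fpoly_def fpoly_poly_def algebra_simps power_numeral_reduce)

lemma fpoly_pos:
  assumes "-1 \<le> x" "x \<le> -3/5"
  shows "0 < fpoly x"
proof -
  have "certified_pos_chain fpoly_poly [-1, -79/100, -139/200, -127/200, -121/200, -3/5]"
    by (simp add: fpoly_poly_def taylor_lower_bound_def pcompose_pCons)
  from poly_pos_if_certified_pos_chain[OF this] assms show ?thesis by (simp add: poly_fpoly_poly)
qed

lemma fpoly_neg:
  assumes "-29/50 \<le> x" "x \<le> 1/2"
  shows "fpoly x < 0"
proof -
  have "certified_pos_chain (- fpoly_poly)
      [-29/50, -1/2, -9/20, -81/200, -51/200, -1/20, 1/100, 3/50, 1/8, 59/200, 99/200, 1/2]"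
    by (simp add: fpoly_poly_def taylor_lower_bound_def pcompose_pCons)
  from poly_pos_if_certified_pos_chain[OF this] assms show ?thesis by (simp add: poly_fpoly_poly)
qed

lemma fpoly_strict_antimono:
  assumes "-3/5 \<le> u" "u < v" "v \<le> -29/50"
  shows "fpoly v < fpoly u"
proof -
  have "certified_pos_chain (- pderiv fpoly_poly) [-3/5, -29/50]"
    by (simp add: fpoly_poly_def taylor_lower_bound_def pcompose_pCons pderiv_pCons)
  from poly_pos_if_certified_pos_chain[OF this]
  have deriv_neg: "poly (pderiv fpoly_poly) x < 0" if "-3/5 \<le> x" "x \<le> -29/50" for x
    using that by simp
  have "\<exists>d. (poly fpoly_poly has_real_derivative d) (at x) \<and> d < 0" if "u \<le> x" "x \<le> v" for x
    using poly_DERIV deriv_neg that assms by (metis order.trans order_less_imp_le)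
  from DERIV_neg_imp_decreasing[OF assms(2) this] show ?thesis by (simp add: poly_fpoly_poly)
qed

lemma fpoly_root_bounds:
  assumes "s \<in> {-1..1/2}" "fpoly s = 0"
  shows "-3/5 < s" "s < -29/50"
  using assms fpoly_pos[of s] fpoly_neg[of s] by force+

lemma fpoly_unique_root: "\<exists>!s. s \<in> {-1..1/2} \<and> fpoly s = 0"
proof -
  have "continuous_on {-3/5..-29/50} fpoly"
    unfolding poly_fpoly_poly[symmetric] by (intro continuous_intros)
  then obtain s where s: "-3/5 \<le> s" "s \<le> -29/50" "fpoly s = 0"
    using IVT2'[of fpoly "-29/50" 0 "-3/5"] fpoly_neg[of "-29/50"] fpoly_pos[of "-3/5"] by auto
  show ?thesis
  proof (rule ex1I[of _ s])
    show "s \<in> {-1..1/2} \<and> fpoly s = 0" using s by simp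
    fix r
    assume r: "r \<in> {-1..1/2} \<and> fpoly r = 0"
    show "r = s"
    proof (rule ccontr)
      assume "r \<noteq> s"
      then consider "r < s" | "s < r" by linarith
      then show False
        using fpoly_strict_antimono[of r s] fpoly_strict_antimono[of s r] fpoly_root_bounds[of r] r s
        by cases auto
    qed
  qed
qed

lemma t0_bounds: "29/50 < t0" "t0 < 3/5"
proof -
  define s where "s = (THE s. s \<in> {-1..1/2} \<and> fpoly s = 0)"
  have "s \<in> {-1..1/2} \<and> fpoly s = 0"
    unfolding s_def by (rule theI'[OF fpoly_unique_root])
  moreover have "t0 = - s" by (simp add: t0_def s_def)
  ultimately show "29/50 < t0" "t0 < 3/5" using fpoly_root_bounds[of s] by auto
qed

lemma separated_set_width:
  fixes S :: "real set"
  assumes "finite S" "card S = Suc n" "\<And>x y. x \<in> S \<Longrightarrow> y \<in> S \<Longrightarrow> x \<noteq> y \<Longrightarrow> d \<le> \<bar>x - y\<bar>"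
  shows "real n * d \<le> Max S - Min S"
  using assms
proof (induction n arbitrary: S)
  case 0
  then have "S \<noteq> {}" by auto
  with 0 show ?case by simp
next
  case (Suc n)
  define M where "M = Max S"
  have M: "M \<in> S" "\<And>x. x \<in> S \<Longrightarrow> x \<le> M"
    using Suc.prems(1,2) by (auto simp: M_def intro!: Max_in)
  define S' where "S' = S - {M}"
  have S': "finite S'" "card S' = Suc n" "S' \<subseteq> S"
    using Suc.prems M by (auto simp: S'_def)
  then have "S' \<noteq> {}" by auto
  have "real n * d \<le> Max S' - Min S'"
    using Suc.IH[OF S'(1,2)] Suc.prems(3) S'(3) by blast
  moreover have "d \<le> M - Max S'"
  proof -
    have "Max S' \<in> S" "Max S' \<noteq> M" using Max_in[OF S'(1) \<open>S' \<noteq> {}\<close>] by (auto simp: S'_def)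
    then show ?thesis using Suc.prems(3)[OF M(1)] M(2) by fastforce
  qed
  moreover have "Min S \<le> Min S'" using Min_antimono[OF S'(3) \<open>S' \<noteq> {}\<close> Suc.prems(1)] .
  ultimately show ?case by (simp add: M_def algebra_simps)
qed

text \<open>Otherwise any two of the \<open>n\<close> angles would differ by more than \<open>d = 2\<pi>/n\<close> and by less
  than \<open>2\<pi> - d\<close>, whereas \<open>n\<close> reals pairwise more than \<open>d\<close> apart span at least \<open>(n - 1) d = 2\<pi> - d\<close>.\<close>

lemma exists_close_angles:
  fixes \<theta> :: "nat \<Rightarrow> real"
  assumes n: "2 \<le> n" and range: "\<And>i. i < n \<Longrightarrow> -pi < \<theta> i \<and> \<theta> i \<le> pi"
  shows "\<exists>i<n. \<exists>j<n. i \<noteq> j \<and> cos (2*pi/n) \<le> cos (\<theta> i - \<theta> j)"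
proof (rule ccontr)
  define d where "d = 2*pi/n"
  have d: "0 < d" "d \<le> pi" "real n * d = 2*pi" using n by (auto simp: d_def field_simps)
  assume no_pair: "\<not> ?thesis"
  have far: "cos (\<theta> i - \<theta> j) < cos d" if "i < n" "j < n" "i \<noteq> j" for i j
    using no_pair that unfolding d_def by force
  have sep: "d < \<bar>\<theta> i - \<theta> j\<bar> \<and> \<bar>\<theta> i - \<theta> j\<bar> < 2*pi - d" if "i < n" "j < n" "i \<noteq> j" for i j
  proof -
    define \<delta> where "\<delta> = \<bar>\<theta> i - \<theta> j\<bar>"
    have \<delta>: "0 \<le> \<delta>" "\<delta> < 2*pi" using range[OF that(1)] range[OF that(2)] by (auto simp: \<delta>_def)
    have "cos \<delta> < cos d" using far[OF that] by (simp add: \<delta>_def)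
    moreover have "cos d \<le> cos \<delta>" if "\<delta> \<le> d"
      using cos_mono_le_eq[of d \<delta>] d \<delta> that by linarith
    moreover have "cos d \<le> cos \<delta>" if "2*pi - d \<le> \<delta>"
      using cos_mono_le_eq[of d "2*pi - \<delta>"] d \<delta> that by simp
    ultimately show ?thesis unfolding \<delta>_def by linarith
  qed
  have inj: "inj_on \<theta> {..<n}"
    by (rule inj_onI) (use sep d in fastforce)
  define S where "S = \<theta> ` {..<n}"
  have S: "finite S" "card S = Suc (n - 1)" "S \<noteq> {}"
    using card_image[OF inj] n by (auto simp: S_def)
  have width: "real (n - 1) * d \<le> Max S - Min S"
    by (rule separated_set_width[OF S(1,2)]) (use sep in \<open>fastforce simp: S_def\<close>)
  obtain i j where ij: "i < n" "\<theta> i = Max S" "j < n" "\<theta> j = Min S"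
    using Max_in[OF S(1,3)] Min_in[OF S(1,3)] by (auto simp: S_def)
  have "real (n - 1) * d = 2*pi - d" using n d(3) by (simp add: of_nat_diff algebra_simps)
  moreover have "i \<noteq> j" using width ij d n pi_gt_zero \<open>real (n - 1) * d = 2*pi - d\<close> by auto
  ultimately show False using sep[OF ij(1,3)] width ij by auto
qed

lemma exists_pair_Re_mult_cnj_ge:
  fixes w :: "nat \<Rightarrow> complex" and n :: nat
  assumes "2 \<le> n"
  shows "\<exists>i<n. \<exists>j<n. i \<noteq> j \<and> cos (2*pi/n) * (cmod (w i) * cmod (w j)) \<le> Re (w i * cnj (w j))"
proof -
  have polar: "Re (w i * cnj (w j)) = cmod (w i) * cmod (w j) * cos (Arg (w i) - Arg (w j))" for i j
  proof -
    have "w i * cnj (w j) = rcis (cmod (w i)) (Arg (w i)) * rcis (cmod (w j)) (- Arg (w j))"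
      unfolding rcis_cmod_Arg rcis_cnj[symmetric] ..
    then show ?thesis by (simp add: rcis_mult)
  qed
  obtain i j where "i < n" "j < n" "i \<noteq> j" and "cos (2*pi/n) \<le> cos (Arg (w i) - Arg (w j))"
    using exists_close_angles[where \<theta> = "\<lambda>i. Arg (w i)"] assms mpi_less_Arg Arg_le_pi by blast
  then show ?thesis
    using polar[of i j] mult_left_mono[of "cos (2*pi/n)" _ "cmod (w i) * cmod (w j)"]
    by (metis mult.commute norm_ge_zero zero_le_mult_iff)
qed

lemma inner_expansion_3:
  fixes e :: "'a::euclidean_space"
  assumes "DIM('a) = 3" "norm e = 1"
  obtains b1 b2 where "\<And>u v. u \<bullet> v = (u \<bullet> e) * (v \<bullet> e) + (u \<bullet> b1) * (v \<bullet> b1) + (u \<bullet> b2) * (v \<bullet> b2)"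
proof -
  let ?H = "{x. e \<bullet> x = 0}"
  have ee: "e \<bullet> e = 1" using assms(2) by (simp add: norm_eq_1)
  obtain B where B: "B \<subseteq> ?H" "pairwise orthogonal B" "\<And>x. x \<in> B \<Longrightarrow> norm x = 1"
      "card B = dim ?H" "span B = ?H"
    using orthonormal_basis_subspace[OF subspace_hyperplane] by metis
  have "e \<noteq> 0" using assms(2) by auto
  then have "dim ?H = 2" using dim_hyperplane[of e] assms(1) by simp
  then obtain b1 b2 where b: "B = {b1, b2}" "b1 \<noteq> b2" using B(4) card_2_iff by metis
  have orth: "b1 \<bullet> b2 = 0" "b2 \<bullet> b1 = 0" "e \<bullet> b1 = 0" "e \<bullet> b2 = 0"
    using B(1,2) b by (auto simp: pairwise_def orthogonal_def inner_commute)
  have unit: "b1 \<bullet> b1 = 1" "b2 \<bullet> b2 = 1" using B(3) b by (auto simp: norm_eq_1)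
  have decomp: "u = (u \<bullet> e) *\<^sub>R e + (u \<bullet> b1) *\<^sub>R b1 + (u \<bullet> b2) *\<^sub>R b2" for u
  proof -
    define r where "r = u - (u \<bullet> e) *\<^sub>R e - (u \<bullet> b1) *\<^sub>R b1 - (u \<bullet> b2) *\<^sub>R b2"
    have "e \<bullet> r = 0" using ee orth by (simp add: r_def inner_diff_right inner_commute)
    then have "r \<in> span B" using B(5) by simp
    moreover have "orthogonal r b" if "b \<in> B" for b
      using that b ee orth unit by (auto simp: r_def orthogonal_def inner_diff_left)
    ultimately have "orthogonal r r" using orthogonal_to_span by blast
    then have "r = 0" by (simp add: orthogonal_def)
    then show ?thesis by (simp add: r_def diff_diff_eq)
  qed
  show thesis
  proof (rule that)
    fix u v :: 'a
    have "u \<bullet> v = ((u \<bullet> e) *\<^sub>R e + (u \<bullet> b1) *\<^sub>R b1 + (u \<bullet> b2) *\<^sub>R b2) \<bullet> v"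
      using decomp[of u] by simp
    also have "\<dots> = (u \<bullet> e) * (v \<bullet> e) + (u \<bullet> b1) * (v \<bullet> b1) + (u \<bullet> b2) * (v \<bullet> b2)"
      by (simp add: inner_add_right inner_commute[of _ v])
    finally show "u \<bullet> v = (u \<bullet> e) * (v \<bullet> e) + (u \<bullet> b1) * (v \<bullet> b1) + (u \<bullet> b2) * (v \<bullet> b2)" .
  qed
qed

lemma exists_pair_inner_ge_around_axis:
  fixes e :: "'a::euclidean_space" and y :: "nat \<Rightarrow> 'a"
  assumes "DIM('a) = 3" "norm e = 1" "\<And>i. i < n \<Longrightarrow> norm (y i) = 1" "2 \<le> n"
  shows "\<exists>i<n. \<exists>j<n. i \<noteq> j \<and>
    (e \<bullet> y i) * (e \<bullet> y j) + cos (2*pi/n) * (sqrt (1 - (e \<bullet> y i)\<^sup>2) * sqrt (1 - (e \<bullet> y j)\<^sup>2))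
      \<le> y i \<bullet> y j"
proof -
  obtain b1 b2 where expand:
    "\<And>u v. u \<bullet> v = (u \<bullet> e) * (v \<bullet> e) + (u \<bullet> b1) * (v \<bullet> b1) + (u \<bullet> b2) * (v \<bullet> b2)"
    using inner_expansion_3[OF assms(1,2)] by blast
  define w where "w i = Complex (y i \<bullet> b1) (y i \<bullet> b2)" for i
  have inner_w: "y i \<bullet> y j = (e \<bullet> y i) * (e \<bullet> y j) + Re (w i * cnj (w j))" for i j
    using expand[of "y i" "y j"] by (simp add: w_def inner_commute)
  have cmod_w: "cmod (w i) = sqrt (1 - (e \<bullet> y i)\<^sup>2)" if "i < n" for i
  proof -
    have "1 - (e \<bullet> y i)\<^sup>2 = (cmod (w i))\<^sup>2"
      using inner_w[of i i] assms(3)[OF that] unfolding cmod_power2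
      by (simp add: norm_eq_1 power2_eq_square)
    then show ?thesis by simp
  qed
  obtain i j where "i < n" "j < n" "i \<noteq> j"
    and "cos (2*pi/n) * (cmod (w i) * cmod (w j)) \<le> Re (w i * cnj (w j))"
    using exists_pair_Re_mult_cnj_ge[OF assms(4)] by blast
  with inner_w[of i j] cmod_w show ?thesis by (metis add_left_mono)
qed

lemma cos_2pi_div_5_ge: "3/10 \<le> cos (2*pi/5)"
proof -
  define C where "C = cos (pi/5)"
  have C_pos: "0 < C" unfolding C_def by (rule cos_gt_zero) (use pi_gt_zero in auto)
  have "cos (3*(pi/5)) = - cos (2*(pi/5))"
    using cos_pi_minus[of "2*(pi/5)"] by (simp add: field_simps)
  then have "4 * C^3 - 3*C = - (2*C^2 - 1)" unfolding C_def cos_treble_cos cos_double_cos .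
  then have "(C + 1) * (4*C^2 - 2*C - 1) = 0"
    by (simp add: algebra_simps power2_eq_square power3_eq_cube)
  with C_pos have quadratic: "4*C^2 - 2*C - 1 = 0" by simp
  have "4/5 \<le> C"
  proof (rule ccontr)
    assume "\<not> 4/5 \<le> C"
    then have "C*C \<le> (4/5)*C" using C_pos by (intro mult_right_mono) auto
    then show False using quadratic \<open>\<not> 4/5 \<le> C\<close> by (simp add: power2_eq_square)
  qed
  moreover have "cos (2*pi/5) = 2*C^2 - 1" unfolding C_def using cos_double_cos[of "pi/5"] by simp
  ultimately show ?thesis using quadratic by linarith
qed

lemma half_lt_inner_lower_bound:
  fixes x y c :: real
  assumes x: "29/50 < x" "x \<le> 1" and y: "29/50 < y" "y \<le> 1" and c: "3/10 \<le> c"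
  shows "1/2 < x*y + c * (sqrt (1 - x\<^sup>2) * sqrt (1 - y\<^sup>2))"
proof -
  define p T where "p = x*y" and "T = (29/50::real)\<^sup>2"
  have sx: "0 \<le> 1 - x\<^sup>2" and sy: "0 \<le> 1 - y\<^sup>2" using x y by (simp_all add: abs_square_le_1)
  have nonneg: "0 \<le> c * (sqrt (1 - x\<^sup>2) * sqrt (1 - y\<^sup>2))" using c sx sy by simp
  show ?thesis
  proof (cases "1/2 < p")
    case True
    with nonneg show ?thesis by (simp add: p_def)
  next
    case False
    have "T \<le> x\<^sup>2" "T \<le> y\<^sup>2" unfolding T_def using x y by (simp_all add: power_mono)
    then have "T * (x\<^sup>2 + y\<^sup>2) \<le> p\<^sup>2 + T\<^sup>2"
      using mult_nonneg_nonneg[of "x\<^sup>2 - T" "y\<^sup>2 - T"] by (simp add: p_def algebra_simps power2_eq_square)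
    then have lower: "1 - (p\<^sup>2 + T\<^sup>2) / T + p\<^sup>2 \<le> (1 - x\<^sup>2) * (1 - y\<^sup>2)"
      by (simp add: T_def p_def field_simps power2_eq_square)
    have "T \<le> p" unfolding p_def T_def using mult_mono[of "29/50" x "29/50" y] x y by (simp add: power2_eq_square)
    moreover have "0 \<le> (p - T) * (1/2 - p)" using False \<open>T \<le> p\<close> by simp
    \<comment> \<open>the next inequality is quadratic in \<open>p\<close> and holds on \<open>[T, 1/2]\<close>\<close>
    ultimately have "(1/2 - p)\<^sup>2 < (3/10)\<^sup>2 * (1 - (p\<^sup>2 + T\<^sup>2) / T + p\<^sup>2)"
      by (simp add: T_def algebra_simps power2_eq_square field_simps)
    also have "\<dots> \<le> (3/10)\<^sup>2 * ((1 - x\<^sup>2) * (1 - y\<^sup>2))"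
      using lower by simp
    also have "\<dots> \<le> c\<^sup>2 * ((1 - x\<^sup>2) * (1 - y\<^sup>2))"
      using c sx sy by (intro mult_right_mono power_mono) auto
    also have "\<dots> = (c * (sqrt (1 - x\<^sup>2) * sqrt (1 - y\<^sup>2)))\<^sup>2"
      using sx sy by (simp add: power_mult_distrib)
    finally have "1/2 - p < c * (sqrt (1 - x\<^sup>2) * sqrt (1 - y\<^sup>2))"
      using nonneg by (rule power2_less_imp_less)
    then show ?thesis by (simp add: p_def)
  qed
qed

lemma sdist_less_arccos_iff:
  assumes "norm x = 1" "norm y = 1" "\<bar>t\<bar> \<le> 1"
  shows "sdist x y < arccos t \<longleftrightarrow> t < x \<bullet> y"
proof -
  have "\<bar>x \<bullet> y\<bar> \<le> 1" using Cauchy_Schwarz_ineq2[of x y] assms by simp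
  then show ?thesis unfolding sdist_def using arccos_less_mono assms(3) by blast
qed

theorem mainTheorem5:
  fixes e0 :: "real^3" and y :: "nat \<Rightarrow> real^3" and m :: nat
  assumes "e0 \<in> S2"
    and "\<And>i. i < m \<Longrightarrow> y i \<in> S2"
    and "\<And>i j. i < m \<Longrightarrow> j < m \<Longrightarrow> i \<noteq> j \<Longrightarrow> sdist (y i) (y j) \<ge> pi/3"
    and "\<And>i. i < m \<Longrightarrow> sdist e0 (y i) < theta0"
  shows "m \<le> 4"
proof (rule ccontr)
  assume "\<not> m \<le> 4"
  then have five: "i < 5 \<Longrightarrow> i < m" for i by simp
  have unit: "norm e0 = 1" "\<And>i. i < m \<Longrightarrow> norm (y i) = 1" using assms(1,2) by (auto simp: S2_def)
  obtain i j where ij: "i < 5" "j < 5" "i \<noteq> j" and close: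
    "(e0 \<bullet> y i) * (e0 \<bullet> y j) + cos (2*pi/5) * (sqrt (1 - (e0 \<bullet> y i)\<^sup>2) * sqrt (1 - (e0 \<bullet> y j)\<^sup>2))
      \<le> y i \<bullet> y j"
    using exists_pair_inner_ge_around_axis[of e0 5 y] unit five by auto
  have axis: "29/50 < e0 \<bullet> y k \<and> e0 \<bullet> y k \<le> 1" if "k < 5" for k
  proof -
    have "t0 < e0 \<bullet> y k"
      using assms(4) sdist_less_arccos_iff unit t0_bounds five[OF that] by (simp add: theta0_def)
    moreover have "e0 \<bullet> y k \<le> 1" using norm_cauchy_schwarz[of e0 "y k"] unit five[OF that] by simp
    ultimately show ?thesis using t0_bounds by linarith
  qed
  have "\<not> sdist (y i) (y j) < arccos (1/2)"
    using assms(3)[OF five[OF ij(1)] five[OF ij(2)] ij(3)] by simp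
  then have "y i \<bullet> y j \<le> 1/2" using sdist_less_arccos_iff[of "y i" "y j" "1/2"] unit(2)[OF five] ij by simp
  moreover have "1/2 < (e0 \<bullet> y i) * (e0 \<bullet> y j)
      + cos (2*pi/5) * (sqrt (1 - (e0 \<bullet> y i)\<^sup>2) * sqrt (1 - (e0 \<bullet> y j)\<^sup>2))"
    using half_lt_inner_lower_bound axis[OF ij(1)] axis[OF ij(2)] cos_2pi_div_5_ge by blast
  ultimately show False using close by linarith
qed

end
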